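(* Let $k,l\ge1$, $1\le r\le 2k(2l+1)$, $\mathcal{B}=\mathcal{B}(2k,2l+1;r)$ and $G=\langle H,V\rangle$. Then \[|\mathcal{O}_G(\mathcal{B})|=\frac14\left(\binom{2k(2l+1)}{r}+2\binom{k(2l+1)}{\frac r2}+\sum_{t=0}^{r}\binom{2k}{t}\binom{2kl}{\frac{r-t}{2}}\right).\]
   Context: $\mathcal{B}(2k,2l+1;r)$ is the set of all subsets of exactly $r$ cells (boards with $r$ blocked cells) of a grid with $2k$ rows and $2l+1$ columns. $\langle H,V\rangle=\{R_0,H,V,R_{180}\}$ is the group generated by the reflections $H$, $V$ across the horizontal and vertical midlines (with $R_{180}$ the 180-degree rotation), acting on boards; $\mathcal{O}_G(\mathcal{B})$ is the set of orbits. Convention: $\binom{a}{b}=0$ when $b$ is not a nonnegative integer or $b>a$. *)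

theory Defs
  imports Complex_Main
begin

(* Cells of a grid with m rows and n columns: (row, column), 0-indexed. *)
definition cells :: "nat \<Rightarrow> nat \<Rightarrow> (nat \<times> nat) set" where
  "cells m n = {0..<m} \<times> {0..<n}"

definition boards :: "nat \<Rightarrow> nat \<Rightarrow> nat \<Rightarrow> (nat \<times> nat) set set" where
  "boards m n r = {B. B \<subseteq> cells m n \<and> card B = r}"

definition reflH :: "nat \<Rightarrow> nat \<Rightarrow> nat \<times> nat \<Rightarrow> nat \<times> nat" where
  "reflH m n = (\<lambda>(i, j). (m - 1 - i, j))"

definition reflV :: "nat \<Rightarrow> nat \<Rightarrow> nat \<times> nat \<Rightarrow> nat \<times> nat" where
  "reflV m n = (\<lambda>(i, j). (i, n - 1 - j))"

definition groupHV :: "nat \<Rightarrow> nat \<Rightarrow> (nat \<times> nat \<Rightarrow> nat \<times> nat) set" where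
  "groupHV m n = {id, reflH m n, reflV m n, reflH m n \<circ> reflV m n}"

definition orbit :: "('a \<Rightarrow> 'a) set \<Rightarrow> 'a set \<Rightarrow> 'a set set" where
  "orbit G B = {g ` B | g. g \<in> G}"

definition orbits :: "('a \<Rightarrow> 'a) set \<Rightarrow> 'a set set \<Rightarrow> 'a set set set" where
  "orbits G \<B> = orbit G ` \<B>"

definition choose_half :: "nat \<Rightarrow> nat \<Rightarrow> nat" where
  "choose_half a m = (if even m then a choose (m div 2) else 0)"

end

theory Submission
  imports "HOL-Algebra.Group_Action" Defs
begin

(* By Burnside's lemma for the Klein four-group {id, H, V, HV}, four times the number of orbits
   is the number of boards fixed by id, H, V and HV.  A board fixed by an involution \<sigma> is a set of
   fixed cells together with a union of \<sigma>-pairs, so if \<sigma> has f fixed cells and p pairs, the fixed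
   r-boards number \<Sum>t (f choose t) (p choose (r - t)/2).  With 2k rows, H and HV have no fixed
   cell and p = k(2l+1); with 2l+1 columns, V fixes the 2k cells of the middle column and p = 2kl. *)

(* Defs is imported last so that orbit and orbits denote its board notions, not those of
   Group_Action. *)

lemma card_subsets_double_card:
  assumes "finite R"
  shows "card {T. T \<subseteq> R \<and> 2 * card T = m} = choose_half (card R) m"
proof (cases "even m")
  case True
  then have "{T. T \<subseteq> R \<and> 2 * card T = m} = {T. T \<subseteq> R \<and> card T = m div 2}" by auto
  then show ?thesis using True n_subsets[OF assms] by (simp add: choose_half_def)
next
  case False
  then have "{T. T \<subseteq> R \<and> 2 * card T = m} = {}" by auto
  then show ?thesis using False unfolding choose_half_def by (simp only: card.empty if_False)
qed

lemma card_weighted_subset_pairs: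
  assumes "finite F" and "finite R"
  shows "card {(S, T). S \<subseteq> F \<and> T \<subseteq> R \<and> card S + 2 * card T = r}
    = (\<Sum>t=0..r. (card F choose t) * choose_half (card R) (r - t))"
proof -
  have "{(S, T). S \<subseteq> F \<and> T \<subseteq> R \<and> card S + 2 * card T = r}
      = (\<Union>t\<in>{0..r}. {S. S \<subseteq> F \<and> card S = t} \<times> {T. T \<subseteq> R \<and> 2 * card T = r - t})"
    by auto
  also have "card \<dots> = (\<Sum>t=0..r. card ({S. S \<subseteq> F \<and> card S = t} \<times> {T. T \<subseteq> R \<and> 2 * card T = r - t}))"
    using assms by (intro card_UN_disjoint) auto
  also have "\<dots> = (\<Sum>t=0..r. (card F choose t) * choose_half (card R) (r - t))"
    using assms by (simp add: card_cartesian_product n_subsets card_subsets_double_card)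
  finally show ?thesis .
qed

locale involution_transversal =
  fixes A :: "'a set" and \<sigma> :: "'a \<Rightarrow> 'a" and R :: "'a set"
  assumes maps_to: "x \<in> A \<Longrightarrow> \<sigma> x \<in> A"
    and involution: "x \<in> A \<Longrightarrow> \<sigma> (\<sigma> x) = x"
    and transversal_subset: "R \<subseteq> A"
    and transversal_disjoint: "x \<in> R \<Longrightarrow> \<sigma> x \<notin> R"
    and transversal_covers: "x \<in> A \<Longrightarrow> \<sigma> x \<noteq> x \<Longrightarrow> x \<in> R \<or> \<sigma> x \<in> R"
begin

abbreviation fixed_points :: "'a set" where
  "fixed_points \<equiv> {x \<in> A. \<sigma> x = x}"

lemma fixed_points_disjoint: "fixed_points \<inter> R = {}" "fixed_points \<inter> \<sigma> ` R = {}"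
proof -
  show "fixed_points \<inter> R = {}"
    using transversal_disjoint by force
  show "fixed_points \<inter> \<sigma> ` R = {}"
  proof (intro equals0I)
    fix x assume "x \<in> fixed_points \<inter> \<sigma> ` R"
    then obtain y where "y \<in> R" "x = \<sigma> y" "\<sigma> x = x" by auto
    then have "\<sigma> y = y" using involution transversal_subset by auto
    with \<open>y \<in> R\<close> show False using transversal_disjoint by metis
  qed
qed

lemma invariant_subset_decompose:
  assumes "B \<subseteq> A" and "\<sigma> ` B = B"
  shows "(B \<inter> fixed_points) \<union> (B \<inter> R) \<union> \<sigma> ` (B \<inter> R) = B"
proof (intro equalityI subsetI)
  fix x assume x: "x \<in> B"
  with assms have "x \<in> A" "\<sigma> x \<in> B" by auto
  show "x \<in> (B \<inter> fixed_points) \<union> (B \<inter> R) \<union> \<sigma> ` (B \<inter> R)"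
  proof (cases "\<sigma> x = x \<or> x \<in> R")
    case True
    with x \<open>x \<in> A\<close> show ?thesis by auto
  next
    case False
    then have "\<sigma> x \<in> R" using transversal_covers \<open>x \<in> A\<close> by auto
    moreover have "x = \<sigma> (\<sigma> x)" using involution \<open>x \<in> A\<close> by simp
    ultimately show ?thesis using \<open>\<sigma> x \<in> B\<close> by blast
  qed
qed (use assms in auto)

lemma assemble_invariant_subset:
  assumes "finite A" and S: "S \<subseteq> fixed_points" and T: "T \<subseteq> R"
  defines "C \<equiv> S \<union> T \<union> \<sigma> ` T"
  shows "C \<subseteq> A" and "\<sigma> ` C = C" and "C \<inter> fixed_points = S" and "C \<inter> R = T"
    and "card C = card S + 2 * card T"
proof -
  have TA: "T \<subseteq> A" using T transversal_subset by auto
  show "C \<subseteq> A" using S TA maps_to by (auto simp: C_def)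
  have "\<sigma> ` S = S" using S by force
  moreover have "\<sigma> ` \<sigma> ` T = T" using TA involution by force
  ultimately show "\<sigma> ` C = C" by (auto simp: C_def image_Un)
  have ST: "S \<inter> T = {}" "S \<inter> \<sigma> ` T = {}"
    using S T fixed_points_disjoint by blast+
  have TsT: "T \<inter> \<sigma> ` T = {}" "\<sigma> ` T \<inter> R = {}"
    using T transversal_disjoint by fast+
  have "T \<inter> fixed_points = {}" "\<sigma> ` T \<inter> fixed_points = {}"
    using T fixed_points_disjoint by blast+
  then show "C \<inter> fixed_points = S" using S by (auto simp: C_def)
  show "C \<inter> R = T" using S T TsT fixed_points_disjoint by (auto simp: C_def)
  have fin: "finite S" "finite T"
    using assms(1) S T transversal_subset by (auto intro: finite_subset)
  have "inj_on \<sigma> T" using TA involution by (metis inj_on_inverseI subsetD)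
  then show "card C = card S + 2 * card T"
    using fin ST TsT by (simp add: C_def card_Un_disjoint Int_Un_distrib2 card_image)
qed

theorem card_invariant_subsets:
  assumes "finite A"
  shows "card {B. B \<subseteq> A \<and> card B = r \<and> \<sigma> ` B = B}
    = (\<Sum>t=0..r. (card fixed_points choose t) * choose_half (card R) (r - t))"
proof -
  let ?P = "{(S, T). S \<subseteq> fixed_points \<and> T \<subseteq> R \<and> card S + 2 * card T = r}"
  have card_decompose: "card (B \<inter> fixed_points) + 2 * card (B \<inter> R) = card B"
    if "B \<subseteq> A" "\<sigma> ` B = B" for B
    using assemble_invariant_subset(5)[OF assms, of "B \<inter> fixed_points" "B \<inter> R"]
    by (simp only: invariant_subset_decompose[OF that] Int_lower2 simp_thms)
  have "bij_betw (\<lambda>B. (B \<inter> fixed_points, B \<inter> R)) {B. B \<subseteq> A \<and> card B = r \<and> \<sigma> ` B = B} ?P"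
  proof (rule bij_betw_byWitness[where f' = "\<lambda>(S, T). S \<union> T \<union> \<sigma> ` T"])
    show "\<forall>B \<in> {B. B \<subseteq> A \<and> card B = r \<and> \<sigma> ` B = B}.
        (\<lambda>(S, T). S \<union> T \<union> \<sigma> ` T) (B \<inter> fixed_points, B \<inter> R) = B"
      using invariant_subset_decompose by auto
    show "\<forall>P \<in> ?P. (\<lambda>B. (B \<inter> fixed_points, B \<inter> R)) ((\<lambda>(S, T). S \<union> T \<union> \<sigma> ` T) P) = P"
      using assemble_invariant_subset[OF assms] by auto
    show "(\<lambda>B. (B \<inter> fixed_points, B \<inter> R)) ` {B. B \<subseteq> A \<and> card B = r \<and> \<sigma> ` B = B} \<subseteq> ?P"
    proof (intro image_subsetI)
      fix B assume "B \<in> {B. B \<subseteq> A \<and> card B = r \<and> \<sigma> ` B = B}"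
      then show "(B \<inter> fixed_points, B \<inter> R) \<in> ?P" using card_decompose[of B] by auto
    qed
    show "(\<lambda>(S, T). S \<union> T \<union> \<sigma> ` T) ` ?P \<subseteq> {B. B \<subseteq> A \<and> card B = r \<and> \<sigma> ` B = B}"
    proof (intro image_subsetI)
      fix P assume "P \<in> ?P"
      then obtain S T where "P = (S, T)" "S \<subseteq> fixed_points" "T \<subseteq> R" "card S + 2 * card T = r"
        by auto
      then show "(\<lambda>(S, T). S \<union> T \<union> \<sigma> ` T) P \<in> {B. B \<subseteq> A \<and> card B = r \<and> \<sigma> ` B = B}"
        using assemble_invariant_subset(1,2,5)[OF assms, of S T] by simp
    qed
  qed
  then have "card {B. B \<subseteq> A \<and> card B = r \<and> \<sigma> ` B = B} = card ?P"
    by (rule bij_betw_same_card)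
  also have "\<dots> = (\<Sum>t=0..r. (card fixed_points choose t) * choose_half (card R) (r - t))"
    using assms transversal_subset
    by (intro card_weighted_subset_pairs) (auto intro: finite_subset)
  finally show ?thesis .
qed

corollary card_invariant_subsets_fixed_point_free:
  assumes "finite A" and "\<And>x. x \<in> A \<Longrightarrow> \<sigma> x \<noteq> x"
  shows "card {B. B \<subseteq> A \<and> card B = r \<and> \<sigma> ` B = B} = choose_half (card R) r"
proof -
  have "fixed_points = {}" using assms(2) by auto
  then have "card {B. B \<subseteq> A \<and> card B = r \<and> \<sigma> ` B = B}
      = (\<Sum>t=0..r. (0 choose t) * choose_half (card R) (r - t))"
    using card_invariant_subsets[OF assms(1)] by (simp only: card.empty)
  also have "\<dots> = choose_half (card R) r"
    by (simp add: sum.atLeast_Suc_atMost)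
  finally show ?thesis .
qed

end

(* The acting group is the abstract Klein group: reflH and reflV are involutions only on the
   cells, not on all of nat \<times> nat, so {id, H, V, HV} is not closed under composition. *)
definition klein4 :: "(bool \<times> bool) monoid" where
  "klein4 = \<lparr>carrier = UNIV, mult = (\<lambda>(a, b) (c, d). (a \<noteq> c, b \<noteq> d)), one = (False, False)\<rparr>"

lemma group_klein4: "group klein4"
  by (rule groupI) (auto simp: klein4_def)

lemma order_klein4: "order klein4 = 4"
  by (simp add: order_def klein4_def flip: UNIV_Times_UNIV)

locale commuting_involutions =
  fixes A :: "'a set" and h v :: "'a \<Rightarrow> 'a"
  assumes h_mem: "x \<in> A \<Longrightarrow> h x \<in> A"
    and v_mem: "x \<in> A \<Longrightarrow> v x \<in> A"
    and h_h: "x \<in> A \<Longrightarrow> h (h x) = x"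
    and v_v: "x \<in> A \<Longrightarrow> v (v x) = x"
    and h_v_commute: "x \<in> A \<Longrightarrow> h (v x) = v (h x)"
begin

definition klein_map :: "bool \<times> bool \<Rightarrow> 'a \<Rightarrow> 'a" where
  "klein_map = (\<lambda>(a, b). (if a then h else id) \<circ> (if b then v else id))"

lemma range_klein_map: "range klein_map = {id, h, v, h \<circ> v}"
  by (auto simp: klein_map_def image_iff UNIV_bool simp flip: UNIV_Times_UNIV)

lemma klein_map_mem: "x \<in> A \<Longrightarrow> klein_map s x \<in> A"
  by (cases s) (auto simp: klein_map_def h_mem v_mem)

lemma klein_map_mult:
  "x \<in> A \<Longrightarrow> klein_map (s \<otimes>\<^bsub>klein4\<^esub> t) x = klein_map s (klein_map t x)"
  by (cases s; cases t) (auto simp: klein_map_def klein4_def h_mem v_mem h_h v_v h_v_commute)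

lemma klein_map_klein_map: "x \<in> A \<Longrightarrow> klein_map s (klein_map s x) = x"
  by (cases s) (auto simp: klein_map_def h_mem v_mem h_h v_v h_v_commute)

lemma klein_map_image:
  assumes "B \<subseteq> A" shows "klein_map s ` B \<subseteq> A" and "card (klein_map s ` B) = card B"
    and "klein_map s ` klein_map s ` B = B"
proof -
  have "inj_on (klein_map s) B"
    using assms by (metis inj_on_inverseI klein_map_klein_map subsetD)
  then show "card (klein_map s ` B) = card B" by (rule card_image)
  show "klein_map s ` B \<subseteq> A" using assms klein_map_mem by blast
  show "klein_map s ` klein_map s ` B = B"
    using assms by (force simp: image_iff klein_map_klein_map)
qed

lemma image_klein_map_mult:
  "B \<subseteq> A \<Longrightarrow> klein_map (s \<otimes>\<^bsub>klein4\<^esub> t) ` B = klein_map s ` klein_map t ` B"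
  unfolding image_image by (intro image_cong) (auto simp: klein_map_mult)

(* Restricted because the carrier of BijGroup consists of extensional maps only. *)
definition subset_action :: "nat \<Rightarrow> bool \<times> bool \<Rightarrow> 'a set \<Rightarrow> 'a set" where
  "subset_action r s = (\<lambda>B \<in> {B. B \<subseteq> A \<and> card B = r}. klein_map s ` B)"

lemma group_action_subset_action:
  "group_action klein4 {B. B \<subseteq> A \<and> card B = r} (subset_action r)"
proof -
  let ?E = "{B. B \<subseteq> A \<and> card B = r}"
  have Bij: "subset_action r s \<in> Bij ?E" for s
    unfolding Bij_def subset_action_def
    by (auto intro!: bij_betw_byWitness[where f' = "(`) (klein_map s)"]
        simp: klein_map_image subset_iff klein_map_klein_map klein_map_mem)
  have mult: "subset_action r (s \<otimes>\<^bsub>klein4\<^esub> t)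
      = compose ?E (subset_action r s) (subset_action r t)" for s t
    unfolding subset_action_def compose_def
    by (intro restrict_ext) (simp add: klein_map_image image_klein_map_mult)
  have "subset_action r \<in> hom klein4 (BijGroup ?E)"
    unfolding hom_def BijGroup_def by (simp add: Bij mult)
  then show ?thesis
    unfolding group_action_def group_hom_def group_hom_axioms_def
    using group_klein4 group_BijGroup by blast
qed

lemma orbits_eq_group_action_orbits:
  "orbits {id, h, v, h \<circ> v} {B. B \<subseteq> A \<and> card B = r}
     = Group_Action.orbits klein4 {B. B \<subseteq> A \<and> card B = r} (subset_action r)"
proof -
  have "orbit (range klein_map) B = Group_Action.orbit klein4 (subset_action r) B"
    if "B \<subseteq> A" "card B = r" for B
    using that by (auto simp: orbit_def Group_Action.orbit_def subset_action_def klein4_def)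
  then show ?thesis
    unfolding orbits_def Group_Action.orbits_def range_klein_map[symmetric] by auto
qed

theorem card_orbits_subsets:
  assumes "finite A"
  shows "4 * card (orbits {id, h, v, h \<circ> v} {B. B \<subseteq> A \<and> card B = r}) =
    card {B. B \<subseteq> A \<and> card B = r} + card {B. B \<subseteq> A \<and> card B = r \<and> h ` B = B}
    + card {B. B \<subseteq> A \<and> card B = r \<and> v ` B = B}
    + card {B. B \<subseteq> A \<and> card B = r \<and> (h \<circ> v) ` B = B}"
proof -
  let ?E = "{B. B \<subseteq> A \<and> card B = r}"
  have "finite ?E"
    using assms by (auto intro: finite_subset[of _ "Pow A"])
  then have "card (Group_Action.orbits klein4 ?E (subset_action r)) * order klein4
      = (\<Sum>s \<in> UNIV. card (invariants ?E (subset_action r) s))"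
    using group_action.burnside[OF group_action_subset_action] by (simp add: klein4_def)
  moreover have "invariants ?E (subset_action r) s
      = {B. B \<subseteq> A \<and> card B = r \<and> klein_map s ` B = B}" for s
    by (auto simp: invariants_def subset_action_def)
  ultimately show ?thesis
    by (simp add: orbits_eq_group_action_orbits order_klein4 klein_map_def UNIV_bool add.assoc
        flip: UNIV_Times_UNIV)
qed

end

lemma finite_cells: "finite (cells m n)"
  by (simp add: cells_def)

lemma card_cells: "card (cells m n) = m * n"
  by (simp add: cells_def card_cartesian_product)

lemma card_boards: "card {B. B \<subseteq> cells m n \<and> card B = r} = (m * n) choose r"
  using n_subsets[OF finite_cells] by (simp add: card_cells)

lemma commuting_involutions_reflections:
  "commuting_involutions (cells m n) (reflH m n) (reflV m n)"
  by unfold_locales (auto simp: cells_def reflH_def reflV_def)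

lemma card_reflH_invariant_boards:
  "card {B. B \<subseteq> cells (2 * k) n \<and> card B = r \<and> reflH (2 * k) n ` B = B}
    = choose_half (k * n) r"
proof -
  have "involution_transversal (cells (2 * k) n) (reflH (2 * k) n) ({0..<k} \<times> {0..<n})"
    by unfold_locales (auto simp: cells_def reflH_def)
  moreover have "x \<in> cells (2 * k) n \<Longrightarrow> reflH (2 * k) n x \<noteq> x" for x
    by (auto simp: cells_def reflH_def; presburger)
  ultimately show ?thesis
    using involution_transversal.card_invariant_subsets_fixed_point_free finite_cells
    by (fastforce simp: card_cartesian_product)
qed

lemma card_reflH_reflV_invariant_boards:
  "card {B. B \<subseteq> cells (2 * k) n \<and> card B = r \<and> (reflH (2 * k) n \<circ> reflV (2 * k) n) ` B = B}
    = choose_half (k * n) r"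
proof -
  have "involution_transversal (cells (2 * k) n) (reflH (2 * k) n \<circ> reflV (2 * k) n)
      ({0..<k} \<times> {0..<n})"
    by unfold_locales (auto simp: cells_def reflH_def reflV_def)
  moreover have "x \<in> cells (2 * k) n \<Longrightarrow> (reflH (2 * k) n \<circ> reflV (2 * k) n) x \<noteq> x" for x
    by (auto simp: cells_def reflH_def reflV_def; presburger)
  ultimately show ?thesis
    using involution_transversal.card_invariant_subsets_fixed_point_free finite_cells
    by (fastforce simp: card_cartesian_product)
qed

lemma card_reflV_invariant_boards:
  "card {B. B \<subseteq> cells m (2 * l + 1) \<and> card B = r \<and> reflV m (2 * l + 1) ` B = B}
    = (\<Sum>t=0..r. (m choose t) * choose_half (m * l) (r - t))"
proof -
  have "involution_transversal (cells m (2 * l + 1)) (reflV m (2 * l + 1)) ({0..<m} \<times> {0..<l})"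
    by unfold_locales (auto simp: cells_def reflV_def)
  moreover have "{x \<in> cells m (2 * l + 1). reflV m (2 * l + 1) x = x} = {0..<m} \<times> {l}"
    by (auto simp: cells_def reflV_def)
  ultimately show ?thesis
    using involution_transversal.card_invariant_subsets[OF _ finite_cells]
    by (simp add: card_cartesian_product)
qed

theorem proposition5p5:
  fixes k l r :: nat
  assumes "k \<ge> 1" and "l \<ge> 1" and "1 \<le> r" and "r \<le> 2*k*(2*l+1)"
  shows "real (card (orbits (groupHV (2*k) (2*l+1)) (boards (2*k) (2*l+1) r)))
    = (1/4) * (real ((2*k*(2*l+1)) choose r) + 2 * real (choose_half (k*(2*l+1)) r)
        + (\<Sum>t=0..r. real ((2*k) choose t) * real (choose_half (2*k*l) (r - t))))"
proof -
  \<comment> \<open>The identity holds for all k, l, r.\<close>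
  have "4 * card (orbits (groupHV (2*k) (2*l+1)) (boards (2*k) (2*l+1) r))
      = ((2*k*(2*l+1)) choose r) + 2 * choose_half (k*(2*l+1)) r
        + (\<Sum>t=0..r. ((2*k) choose t) * choose_half (2*k*l) (r - t))"
    unfolding groupHV_def boards_def
      commuting_involutions.card_orbits_subsets[OF commuting_involutions_reflections finite_cells]
      card_boards card_reflH_invariant_boards card_reflV_invariant_boards
      card_reflH_reflV_invariant_boards
    by simp
  from arg_cong[OF this, of real] show ?thesis
    by (simp add: of_nat_sum)
qed

end
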